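(* Let $n,p,q,c,d$ be nonnegative integers. Then \[ \sum_{k=0}^n \binom{p+k}{p}\binom{q+n-k}{q}\binom{k}{c}\binom{n-k}{d}H_{p+k} = \binom{n+p+q+1}{n-c-d}\binom{p+c}{c}\binom{q+d}{d}\bigl(H_{n+p+q+1}-H_{p+q+c+d+1}+H_{p+c}\bigr). \]
   Context: For a nonnegative integer $N$, $H_N=\sum_{j=1}^N \frac1j$ (so $H_0=0$). For integers $r$ and $j$, $\binom{r}{j}=\frac{r(r-1)\cdots(r-j+1)}{j!}$ if $j\ge 0$ and $\binom{r}{j}=0$ if $j<0$. *)

theory Defs
  imports "HOL-Analysis.Analysis"
begin

definition binom_int :: "nat \<Rightarrow> int \<Rightarrow> nat" where
  "binom_int r j = (if j < 0 then 0 else r choose nat j)"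

end

theory Submission imports Defs begin

text \<open>For \<open>c = d = 0\<close> the identity
  \<open>\<Sum>j\<le>m. C(P+j,P) C(Q+m-j,Q) H(P+j) = C(m+P+Q+1,m) (H(m+P+Q+1) - H(P+Q+1) + H P)\<close>
  follows by induction on \<open>m\<close> and then on \<open>Q\<close>: Pascal's rule in the second factor splits the
  left-hand side into two instances of smaller size, and the right-hand sides recombine by a
  Pascal rule for the product of a binomial coefficient with a difference of harmonic numbers.
  The general case reduces to this one by trinomial revision
  \<open>C(p+k,p) C(k,c) = C(p+c,c) C(p+k,p+c)\<close>: only \<open>k = c + j\<close> with \<open>j \<le> n - c - d\<close>
  contribute, and the \<open>(k,c)\<close> and \<open>(n-k,d)\<close> factors shift \<open>p,q\<close> to \<open>p+c, q+d\<close>.\<close>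

lemma choose_harm_diff_Suc:
  fixes a m s :: nat and h :: real
  assumes "a - m = Suc s"
  shows "real (Suc a choose Suc m) * (harm (Suc a) - harm (Suc s) + h)
       = real (a choose m) * (harm a - harm (Suc s) + h)
         + real (a choose Suc m) * (harm a - harm s + h)"
proof -
  define z where "z = real (Suc a choose Suc m)"
  define x where "x = real (a choose m)"
  define y where "y = real (a choose Suc m)"
  have "(Suc a - Suc m) * (Suc a choose Suc m) = Suc a * (a choose Suc m)"
    using binomial_absorb_comp[of "Suc a" "Suc m"] by simp
  then have "real (Suc s) * z = real (Suc a) * y"
    using assms unfolding z_def y_def by (metis diff_Suc_Suc of_nat_mult)
  then have absorb: "z / real (Suc a) = y / real (Suc s)"
    by (simp add: field_simps)
  have pascal: "z = x + y"
    unfolding x_def y_def z_def by simp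
  have "z * (harm (Suc a) - harm (Suc s) + h)
      = z * (harm a - harm s + h) + z / real (Suc a) - z / real (Suc s)"
    by (simp add: harm_Suc inverse_eq_divide algebra_simps)
  also have "\<dots> = z * (harm a - harm s + h) + y / real (Suc s) - z / real (Suc s)"
    using absorb by simp
  also have "\<dots> = x * (harm a - harm (Suc s) + h) + y * (harm a - harm s + h)"
    unfolding pascal
    by (simp add: harm_Suc inverse_eq_divide algebra_simps diff_divide_distrib add_divide_distrib)
  finally show ?thesis
    unfolding x_def y_def z_def .
qed

lemma sum_mult_choose_pascal:
  fixes f g :: "nat \<Rightarrow> 'a::comm_semiring_1"
  shows "(\<Sum>j\<le>Suc m. f j * of_nat (Suc Q + (Suc m - j) choose Suc Q) * g j)
       = (\<Sum>j\<le>m. f j * of_nat (Suc Q + (m - j) choose Suc Q) * g j)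
         + (\<Sum>j\<le>Suc m. f j * of_nat (Q + (Suc m - j) choose Q) * g j)"
proof -
  have "(\<Sum>j\<le>m. f j * of_nat (Suc Q + (Suc m - j) choose Suc Q) * g j)
      = (\<Sum>j\<le>m. f j * of_nat (Suc Q + (m - j) choose Suc Q) * g j
                 + f j * of_nat (Q + (Suc m - j) choose Q) * g j)"
  proof (rule sum.cong[OF refl])
    fix j assume "j \<in> {..m}"
    then have "Suc Q + (Suc m - j) = Suc (Q + (Suc m - j))" "Q + (Suc m - j) = Suc Q + (m - j)"
      by auto
    then show "f j * of_nat (Suc Q + (Suc m - j) choose Suc Q) * g j
             = f j * of_nat (Suc Q + (m - j) choose Suc Q) * g j
               + f j * of_nat (Q + (Suc m - j) choose Q) * g j"
      by (simp add: algebra_simps)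
  qed
  then show ?thesis
    unfolding sum.atMost_Suc[of _ m] by (simp add: sum.distrib add.assoc del: sum.atMost_Suc)
qed

lemma sum_choose_choose_harm:
  fixes P Q m :: nat
  shows "(\<Sum>j\<le>m. real ((P + j) choose P) * real ((Q + (m - j)) choose Q) * harm (P + j))
       = real ((m + P + Q + 1) choose m) * (harm (m + P + Q + 1) - harm (P + Q + 1) + harm P)"
proof (induction m arbitrary: Q)
  case 0
  then show ?case by simp
next
  case (Suc m)
  note IH_m = Suc.IH
  show ?case
  proof (induction Q)
    case 0
    have "(P + Suc m) choose P = (m + P + 1) choose Suc m"
      using binomial_symmetric[of P "P + Suc m"] by (simp add: add_ac)
    moreover have "(m + P + 1) - m = Suc P"
      by simp
    ultimately show ?case
      using IH_m[of 0] choose_harm_diff_Suc[of "m + P + 1" m P "harm P"]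
      by (simp add: algebra_simps)
  next
    case (Suc Q)
    have "(\<Sum>j\<le>Suc m. real ((P + j) choose P) * real ((Suc Q + (Suc m - j)) choose Suc Q) * harm (P + j))
       = (\<Sum>j\<le>m. real ((P + j) choose P) * real ((Suc Q + (m - j)) choose Suc Q) * harm (P + j))
         + (\<Sum>j\<le>Suc m. real ((P + j) choose P) * real ((Q + (Suc m - j)) choose Q) * harm (P + j))"
      by (rule sum_mult_choose_pascal)
    also have "\<dots> = real ((m + P + Suc Q + 1) choose m) * (harm (m + P + Suc Q + 1) - harm (P + Suc Q + 1) + harm P)
         + real ((Suc m + P + Q + 1) choose Suc m) * (harm (Suc m + P + Q + 1) - harm (P + Q + 1) + harm P)"
      unfolding IH_m Suc.IH ..
    also have "\<dots> = real ((Suc m + P + Suc Q + 1) choose Suc m)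
                     * (harm (Suc m + P + Suc Q + 1) - harm (P + Suc Q + 1) + harm P)"
    proof -
      have "m + P + Q + 2 - m = Suc (P + Q + 1)"
        by simp
      from choose_harm_diff_Suc[OF this, of "harm P"] show ?thesis
        by (simp add: algebra_simps)
    qed
    finally show ?case .
  qed
qed

lemma trinomial_revision:
  fixes a b i :: nat
  shows "(a + (b + i) choose a) * (b + i choose b) = (a + b choose b) * (a + b + i choose (a + b))"
proof -
  have "(a + b + i choose (a + b)) * (a + b choose b) = (a + b + i choose b) * (a + i choose a)"
    using choose_mult[of b "a + b" "a + b + i"] by (simp add: add_ac)
  moreover have "(a + b + i choose (b + i)) * (b + i choose b) = (a + b + i choose b) * (a + i choose i)"
    using choose_mult[of b "b + i" "a + b + i"] by (simp add: add_ac)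
  moreover have "a + (b + i) choose a = a + b + i choose (b + i)"
    using binomial_symmetric[of a "a + (b + i)"] by (simp add: add.assoc)
  moreover have "a + i choose i = a + i choose a"
    using binomial_symmetric[of a "a + i"] by simp
  ultimately show ?thesis
    by (simp add: mult.commute)
qed

lemma sum_atLeastAtMost_eq_sum_shifted:
  fixes f :: "nat \<Rightarrow> 'a::comm_monoid_add"
  assumes "c + m \<le> n" and "\<And>k. k \<le> n \<Longrightarrow> k < c \<or> c + m < k \<Longrightarrow> f k = 0"
  shows "(\<Sum>k=0..n. f k) = (\<Sum>j\<le>m. f (c + j))"
proof -
  have "(\<Sum>k=0..n. f k) = (\<Sum>k=c..c+m. f k)"
    using assms by (intro sum.mono_neutral_right) auto
  also have "\<dots> = (\<Sum>j=0..m. f (c + j))"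
    using sum.shift_bounds_cl_nat_ivl[of f 0 c m] by (simp add: add.commute)
  finally show ?thesis
    by (simp add: atMost_atLeast0)
qed

lemma sum_choose_choose_harm_shifted:
  fixes m p q c d n :: nat
  assumes n: "n = c + d + m"
  shows "(\<Sum>k=0..n. real ((p+k) choose p) * real ((q+n-k) choose q)
            * real (k choose c) * real ((n-k) choose d) * harm (p+k))
       = real ((n+p+q+1) choose m) * real ((p+c) choose c) * real ((q+d) choose d)
            * (harm (n+p+q+1) - harm (p+q+c+d+1) + harm (p+c))"
proof -
  define f where "f k = real ((p+k) choose p) * real ((q+n-k) choose q)
            * real (k choose c) * real ((n-k) choose d) * (harm (p+k) :: real)" for k
  have "(\<Sum>k=0..n. f k) = (\<Sum>j\<le>m. f (c + j))"
    by (rule sum_atLeastAtMost_eq_sum_shifted) (auto simp: f_def n)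
  also have "\<dots> = (\<Sum>j\<le>m. real ((p+c) choose c) * real ((q+d) choose d) *
        (real ((p+c+j) choose (p+c)) * real (((q+d)+(m-j)) choose (q+d)) * harm ((p+c)+j)))"
  proof (rule sum.cong[OF refl])
    fix j assume "j \<in> {..m}"
    then have "n - (c+j) = d + (m - j)" "q + n - (c+j) = q + (d + (m-j))"
      by (auto simp: n)
    then show "f (c+j) = real ((p+c) choose c) * real ((q+d) choose d) *
        (real ((p+c+j) choose (p+c)) * real (((q+d)+(m-j)) choose (q+d)) * harm ((p+c)+j))"
      using trinomial_revision[of p c j, THEN arg_cong[where f = real]]
        trinomial_revision[of q d "m-j", THEN arg_cong[where f = real]]
      unfolding f_def of_nat_mult by (simp add: algebra_simps)
  qed
  also have "\<dots> = real ((p+c) choose c) * real ((q+d) choose d) *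
       (real ((m+(p+c)+(q+d)+1) choose m) * (harm (m+(p+c)+(q+d)+1) - harm ((p+c)+(q+d)+1) + harm (p+c)))"
    unfolding sum_distrib_left[symmetric] sum_choose_choose_harm ..
  also have "m+(p+c)+(q+d)+1 = n+p+q+1"
    by (simp add: n)
  finally show ?thesis
    unfolding f_def by (simp add: algebra_simps)
qed

theorem mainTheorem4:
  fixes n p q c d :: nat
  shows "(\<Sum>k=0..n. real ((p+k) choose p) * real ((q+n-k) choose q)
            * real (k choose c) * real ((n-k) choose d) * harm (p+k))
       = real (binom_int (n+p+q+1) (int n - int c - int d)) * real ((p+c) choose c)
            * real ((q+d) choose d)
            * (harm (n+p+q+1) - harm (p+q+c+d+1) + harm (p+c))"
proof (cases "c + d \<le> n")
  case True
  then have "binom_int (n+p+q+1) (int n - int c - int d) = (n+p+q+1) choose (n - c - d)"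
    by (simp add: binom_int_def nat_diff_distrib)
  with True show ?thesis
    using sum_choose_choose_harm_shifted[of n c d "n - c - d" p q] by simp
next
  case False
  have "k \<le> n \<Longrightarrow> k < c \<or> n - k < d" for k
    using False by linarith
  then have "(\<Sum>k=0..n. real ((p+k) choose p) * real ((q+n-k) choose q)
            * real (k choose c) * real ((n-k) choose d) * harm (p+k)) = 0"
    by (intro sum.neutral) fastforce
  moreover have "binom_int (n+p+q+1) (int n - int c - int d) = 0"
    using False by (simp add: binom_int_def)
  ultimately show ?thesis
    by simp
qed

end
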